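(* Let $B:=M_n(\mathbb{C})$, let $R$ be a tolerance relation on $\{1,\ldots,n\}$ and let $A=A(R)\subset M_n(\mathbb{C})$ be the subspace of matrices $a$ with $a_{ij}=0$ whenever $(i,j)\notin R$. Let $F:\mathcal{S}(B)\to\mathcal{S}(A)$ be the map restricting states of $B$ to $A$. The following are equivalent: (i) $F$ is injective; (ii) the restriction of $F$ to pure states of $B$ is injective; (iii) $A=B=M_n(\mathbb{C})$.
   Context: A tolerance relation on a set $X$ is a reflexive and symmetric relation $R\subset X\times X$. $A(R)$ is an operator system in $M_n(\mathbb{C})$ (it contains the identity and is closed under adjoints). A state of $A$ is a linear functional $\varphi:A\to\mathbb{C}$ with $\varphi(a)\ge0$ for every positive semidefinite $a\in A$ and $\varphi(1)=1$; $\mathcal{S}(\cdot)$ denotes the set of states; pure states are extremal states. *)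

theory Defs
  imports "HOL-Analysis.Analysis"
begin

text \<open>n x n complex matrices are modelled as complex^'n^'n for a finite index type 'n
  (with CARD('n) = n); the index set {1..n} is the type 'n.\<close>

type_synonym 'n cmat = "complex^'n^'n"

definition tolerance_rel :: "('n \<times> 'n) set \<Rightarrow> bool" where
  "tolerance_rel R \<longleftrightarrow> (\<forall>i. (i, i) \<in> R) \<and> sym R"

definition A_of :: "('n::finite \<times> 'n) set \<Rightarrow> 'n cmat set" where
  "A_of R = {a. \<forall>i j. (i, j) \<notin> R \<longrightarrow> a $ i $ j = 0}"

definition cscale :: "complex \<Rightarrow> 'n::finite cmat \<Rightarrow> 'n cmat" where
  "cscale c a = (\<chi> i j. c * a $ i $ j)"

definition psd :: "'n::finite cmat \<Rightarrow> bool" where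
  "psd a \<longleftrightarrow> (\<forall>x :: complex^'n.
     let q = (\<Sum>i\<in>UNIV. \<Sum>j\<in>UNIV. cnj (x $ i) * a $ i $ j * x $ j)
     in Im q = 0 \<and> 0 \<le> Re q)"

text \<open>A state of the subspace A, represented by a function on all matrices whose
  values outside A are irrelevant.\<close>
definition state_on :: "'n::finite cmat set \<Rightarrow> ('n cmat \<Rightarrow> complex) \<Rightarrow> bool" where
  "state_on A \<phi> \<longleftrightarrow>
     (\<forall>a\<in>A. \<forall>b\<in>A. \<phi> (a + b) = \<phi> a + \<phi> b) \<and>
     (\<forall>c. \<forall>a\<in>A. \<phi> (cscale c a) = c * \<phi> a) \<and>
     (\<forall>a\<in>A. psd a \<longrightarrow> Im (\<phi> a) = 0 \<and> 0 \<le> Re (\<phi> a)) \<and>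
     \<phi> (mat 1) = 1"

definition pure_state :: "('n::finite cmat \<Rightarrow> complex) \<Rightarrow> bool" where
  "pure_state \<phi> \<longleftrightarrow> state_on UNIV \<phi> \<and>
     (\<forall>\<psi>1 \<psi>2 (t::real). state_on UNIV \<psi>1 \<and> state_on UNIV \<psi>2 \<and> 0 < t \<and> t < 1 \<and>
        \<phi> = (\<lambda>a. of_real t * \<psi>1 a + of_real (1 - t) * \<psi>2 a) \<longrightarrow> \<psi>1 = \<phi> \<and> \<psi>2 = \<phi>)"

end

theory Submission
  imports Defs
begin

(*
  If (i, j) is not in R, then i \<noteq> j and (j, i) is not in R either, so the vector states of
  (e_i + e_j)/sqrt 2 and (e_i - e_j)/sqrt 2 agree on A(R) but differ at the matrix unit E_ij.
  Both are pure: if the vector state \<omega>_x of a unit vector x is a proper convex combination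
  of states, each of them vanishes on every positive matrix killed by \<omega>_x, in particular on
  u u* for u orthogonal to x.  By Cauchy-Schwarz such a state also vanishes on u v* and v u*,
  which pins it down to \<omega>_x.
*)

definition cinner :: "complex^'n::finite \<Rightarrow> complex^'n \<Rightarrow> complex" where
  "cinner x y = (\<Sum>k\<in>UNIV. cnj (x$k) * y$k)"

definition outer :: "complex^'n::finite \<Rightarrow> complex^'n \<Rightarrow> 'n cmat" where
  "outer u v = (\<chi> p q. u$p * cnj (v$q))"

definition vector_state :: "complex^'n::finite \<Rightarrow> 'n cmat \<Rightarrow> complex" where
  "vector_state x a = (\<Sum>k\<in>UNIV. \<Sum>l\<in>UNIV. cnj (x$k) * a$k$l * x$l)"

lemma psd_iff_vector_state:
  "psd a \<longleftrightarrow> (\<forall>x. Im (vector_state x a) = 0 \<and> 0 \<le> Re (vector_state x a))"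
  by (simp add: psd_def vector_state_def Let_def)

lemma vector_state_outer: "vector_state x (outer v w) = cinner x v * cnj (cinner x w)"
  unfolding vector_state_def outer_def cinner_def cnj_sum by (simp add: sum_product mult_ac)

lemma vector_state_mat_1: "vector_state x (mat 1) = cinner x x"
  unfolding vector_state_def cinner_def mat_def
  by (simp add: if_distrib[of "\<lambda>z. z * _"] if_distrib[of "\<lambda>z. _ * z"] cong: if_cong)

lemma cinner_axis: "cinner x (axis k 1) = cnj (x$k)"
  by (simp add: cinner_def axis_def if_distrib[of "\<lambda>z. _ * z"] cong: if_cong)

lemma psd_outer: "psd (outer u u)"
proof -
  have "vector_state x (outer u u) = of_real ((Re (cinner x u))\<^sup>2 + (Im (cinner x u))\<^sup>2)" for x
    by (simp add: vector_state_outer complex_mult_cnj)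
  then show ?thesis by (simp add: psd_iff_vector_state)
qed

lemma sum_UNIV_two_points:
  fixes f :: "'n::finite \<Rightarrow> 'b::comm_monoid_add"
  assumes "i \<noteq> j" "\<And>k. k \<noteq> i \<Longrightarrow> k \<noteq> j \<Longrightarrow> f k = 0"
  shows "sum f UNIV = f i + f j"
proof -
  have "sum f UNIV = sum f {i, j}"
    by (rule sum.mono_neutral_right) (use assms in auto)
  with assms(1) show ?thesis by simp
qed

lemma vector_state_two_point:
  fixes i j :: "'n::finite"
  assumes "i \<noteq> j"
  shows "vector_state (\<chi> k. if k = i then \<alpha> else if k = j then \<beta> else 0) a
    = cnj \<alpha> * \<alpha> * a$i$i + cnj \<alpha> * \<beta> * a$i$j + cnj \<beta> * \<alpha> * a$j$i + cnj \<beta> * \<beta> * a$j$j"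
  unfolding vector_state_def
  by (subst sum_UNIV_two_points[OF assms], simp, subst (1 2) sum_UNIV_two_points[OF assms])
     (use assms in \<open>auto simp: algebra_simps\<close>)

lemma state_add: "state_on UNIV \<psi> \<Longrightarrow> \<psi> (a + b) = \<psi> a + \<psi> b"
  by (simp add: state_on_def)

lemma state_cscale: "state_on UNIV \<psi> \<Longrightarrow> \<psi> (cscale c a) = c * \<psi> a"
  by (simp add: state_on_def)

lemma state_psd: "state_on UNIV \<psi> \<Longrightarrow> psd a \<Longrightarrow> Im (\<psi> a) = 0 \<and> 0 \<le> Re (\<psi> a)"
  by (simp add: state_on_def)

lemma state_zero: "state_on UNIV \<psi> \<Longrightarrow> \<psi> 0 = 0"
  using state_cscale[of \<psi> 0 0] by (simp add: cscale_def vec_eq_iff zero_vec_def)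

lemma state_sum: "state_on UNIV \<psi> \<Longrightarrow> \<psi> (\<Sum>k\<in>S. f k) = (\<Sum>k\<in>S. \<psi> (f k))"
  by (induction S rule: infinite_finite_induct) (simp_all add: state_zero state_add)

lemma matrix_eq_sum_outer_axis:
  "(a::'n::finite cmat) = (\<Sum>k\<in>UNIV. \<Sum>l\<in>UNIV. cscale (a$k$l) (outer (axis k 1) (axis l 1)))"
  by (simp add: vec_eq_iff cscale_def outer_def axis_def if_distrib[of "\<lambda>z. z * _"]
      if_distrib[of "\<lambda>z. _ * z"] if_distrib[of "\<lambda>z. cnj z"] cong: if_cong)

lemma state_eq_sum_outer_axis:
  "state_on UNIV \<psi> \<Longrightarrow> \<psi> a = (\<Sum>k\<in>UNIV. \<Sum>l\<in>UNIV. a$k$l * \<psi> (outer (axis k 1) (axis l 1)))"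
  by (subst matrix_eq_sum_outer_axis) (simp add: state_sum state_cscale)

lemma complex_eq_0_if_affine_nonneg:
  fixes \<sigma> \<gamma> :: complex
  assumes nonneg: "\<And>t::real. Im (of_real t * \<sigma> + \<gamma>) = 0 \<and> 0 \<le> Re (of_real t * \<sigma> + \<gamma>)"
  shows "\<sigma> = 0"
proof (rule complex_eqI)
  show "Im \<sigma> = Im 0"
    using nonneg[of 0] nonneg[of 1] by simp
  show "Re \<sigma> = Re 0"
  proof (rule ccontr)
    assume "Re \<sigma> \<noteq> Re 0"
    then have "(- (Re \<gamma> + 1) / Re \<sigma>) * Re \<sigma> + Re \<gamma> = -1"
      by (simp add: field_simps)
    with nonneg[of "- (Re \<gamma> + 1) / Re \<sigma>"] show False
      by simp
  qed
qed

(* Cauchy-Schwarz: c \<mapsto> \<psi>((c u + v)(c u + v)* ) = c \<alpha> + cnj c \<beta> + \<gamma> is nonnegative for all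
   complex c, which forces \<alpha> = \<beta> = 0. *)
lemma state_outer_eq_0:
  assumes state: "state_on UNIV \<psi>" and null: "\<psi> (outer u u) = 0"
  shows "\<psi> (outer u v) = 0" "\<psi> (outer v u) = 0"
proof -
  define \<alpha> \<beta> \<gamma> where "\<alpha> = \<psi> (outer u v)" and "\<beta> = \<psi> (outer v u)" and "\<gamma> = \<psi> (outer v v)"
  have "outer (c *s u + v) (c *s u + v) =
      cscale (c * cnj c) (outer u u) + cscale c (outer u v) + cscale (cnj c) (outer v u) + outer v v" for c
    by (simp add: vec_eq_iff outer_def cscale_def algebra_simps)
  then have "\<psi> (outer (c *s u + v) (c *s u + v)) = c * \<alpha> + cnj c * \<beta> + \<gamma>" for c
    by (simp add: null state_add[OF state] state_cscale[OF state] \<alpha>_def \<beta>_def \<gamma>_def)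
  with state_psd[OF state psd_outer]
  have nonneg: "Im (c * \<alpha> + cnj c * \<beta> + \<gamma>) = 0 \<and> 0 \<le> Re (c * \<alpha> + cnj c * \<beta> + \<gamma>)" for c
    by metis
  have "\<alpha> + \<beta> = 0"
  proof (rule complex_eq_0_if_affine_nonneg)
    fix t :: real
    show "Im (of_real t * (\<alpha> + \<beta>) + \<gamma>) = 0 \<and> 0 \<le> Re (of_real t * (\<alpha> + \<beta>) + \<gamma>)"
      using nonneg[of "of_real t"] by (simp add: algebra_simps)
  qed
  moreover have "\<i> * (\<alpha> - \<beta>) = 0"
  proof (rule complex_eq_0_if_affine_nonneg)
    fix t :: real
    show "Im (of_real t * (\<i> * (\<alpha> - \<beta>)) + \<gamma>) = 0 \<and> 0 \<le> Re (of_real t * (\<i> * (\<alpha> - \<beta>)) + \<gamma>)"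
      using nonneg[of "\<i> * of_real t"] by (simp add: algebra_simps)
  qed
  ultimately have "\<alpha> = 0" "\<beta> = 0"
    by (simp_all add: add_eq_0_iff)
  then show "\<psi> (outer u v) = 0" "\<psi> (outer v u) = 0"
    by (simp_all add: \<alpha>_def \<beta>_def)
qed

lemma state_outer_eq_if_vanishing_on_complement:
  assumes state: "state_on UNIV \<psi>" and unit: "cinner x x = 1"
    and perp: "\<And>u. cinner x u = 0 \<Longrightarrow> \<psi> (outer u u) = 0"
  shows "\<psi> (outer v w) = cinner x v * cnj (cinner x w) * \<psi> (outer x x)"
proof -
  define c d where "c = cinner x v" and "d = cinner x w"
  define u u' where "u = v - c *s x" and "u' = w - d *s x"
  have "cinner x (y - e *s x) = cinner x y - e * cinner x x" for y e
    by (simp add: cinner_def right_diff_distrib sum_subtractf sum_distrib_left mult.left_commute)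
  then have "cinner x u = 0" "cinner x u' = 0"
    by (simp_all add: u_def u'_def c_def d_def unit)
  then have null: "\<psi> (outer u u) = 0" and null': "\<psi> (outer u' u') = 0"
    by (simp_all add: perp)
  have "\<psi> (outer x u') = 0" "\<psi> (outer u x) = 0" "\<psi> (outer u u') = 0"
    using state_outer_eq_0[OF state null] state_outer_eq_0[OF state null'] by simp_all
  moreover have "outer v w =
      cscale (c * cnj d) (outer x x) + cscale c (outer x u') + cscale (cnj d) (outer u x) + outer u u'"
    by (simp add: vec_eq_iff outer_def cscale_def u_def u'_def algebra_simps)
  ultimately show ?thesis
    by (simp add: state_add[OF state] state_cscale[OF state] c_def d_def)
qed

lemma state_eq_vector_state_if_vanishing:
  assumes state: "state_on UNIV \<psi>" and unit: "cinner x x = 1"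
    and null: "\<And>p. psd p \<Longrightarrow> vector_state x p = 0 \<Longrightarrow> \<psi> p = 0"
  shows "\<psi> = vector_state x"
proof
  fix a
  have perp: "\<psi> (outer u u) = 0" if "cinner x u = 0" for u
    by (simp add: null psd_outer vector_state_outer that)
  have units: "\<psi> (outer (axis k 1) (axis l 1)) = cnj (x$k) * x$l * \<psi> (outer x x)" for k l
    using state_outer_eq_if_vanishing_on_complement[OF state unit perp, of "axis k 1" "axis l 1"]
    by (simp add: cinner_axis)
  have scaled: "\<psi> b = vector_state x b * \<psi> (outer x x)" for b
    by (simp add: state_eq_sum_outer_axis[OF state, of b] units vector_state_def sum_distrib_left mult_ac)
  have "\<psi> (outer x x) = 1"
    using scaled[of "mat 1"] state unit by (simp add: vector_state_mat_1 state_on_def)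
  with scaled show "\<psi> a = vector_state x a"
    by simp
qed

lemma state_vector_state:
  assumes "cinner x x = 1"
  shows "state_on UNIV (vector_state x)"
  unfolding state_on_def
proof (intro conjI ballI allI impI)
  show "vector_state x (a + b) = vector_state x a + vector_state x b" for a b
    by (simp add: vector_state_def algebra_simps sum.distrib)
  show "vector_state x (cscale c a) = c * vector_state x a" for c a
    by (simp add: vector_state_def cscale_def sum_distrib_left mult_ac)
  show "Im (vector_state x a) = 0" "0 \<le> Re (vector_state x a)" if "psd a" for a
    using that by (simp_all add: psd_iff_vector_state)
  show "vector_state x (mat 1) = 1"
    by (simp add: vector_state_mat_1 assms)
qed

lemma state_convex_combination_eq_0:
  assumes "state_on UNIV \<psi>\<^sub>1" "state_on UNIV \<psi>\<^sub>2" "0 < t" "t < 1" "psd p"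
    and "of_real t * \<psi>\<^sub>1 p + of_real (1 - t) * \<psi>\<^sub>2 p = 0"
  shows "\<psi>\<^sub>1 p = 0" "\<psi>\<^sub>2 p = 0"
proof -
  have "Im (\<psi>\<^sub>1 p) = 0" "0 \<le> Re (\<psi>\<^sub>1 p)" "Im (\<psi>\<^sub>2 p) = 0" "0 \<le> Re (\<psi>\<^sub>2 p)"
    using state_psd assms(1,2,5) by blast+
  moreover have "t * Re (\<psi>\<^sub>1 p) + (1 - t) * Re (\<psi>\<^sub>2 p) = 0"
    using arg_cong[OF assms(6), of Re] by simp
  moreover have "0 \<le> t * Re (\<psi>\<^sub>1 p)" "0 \<le> (1 - t) * Re (\<psi>\<^sub>2 p)"
    using calculation assms(3,4) by simp_all
  ultimately show "\<psi>\<^sub>1 p = 0" "\<psi>\<^sub>2 p = 0"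
    using assms(3,4) by (simp_all add: complex_eq_iff add_nonneg_eq_0_iff)
qed

lemma pure_state_vector_state:
  assumes unit: "cinner x x = 1"
  shows "pure_state (vector_state x)"
  unfolding pure_state_def
proof (intro conjI allI impI)
  show "state_on UNIV (vector_state x)"
    using unit by (rule state_vector_state)
  fix \<psi>\<^sub>1 \<psi>\<^sub>2 :: "'a cmat \<Rightarrow> complex" and t :: real
  assume "state_on UNIV \<psi>\<^sub>1 \<and> state_on UNIV \<psi>\<^sub>2 \<and> 0 < t \<and> t < 1 \<and>
    vector_state x = (\<lambda>a. of_real t * \<psi>\<^sub>1 a + of_real (1 - t) * \<psi>\<^sub>2 a)"
  then have states: "state_on UNIV \<psi>\<^sub>1" "state_on UNIV \<psi>\<^sub>2" and "0 < t" "t < 1"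
    and split: "\<And>a. vector_state x a = of_real t * \<psi>\<^sub>1 a + of_real (1 - t) * \<psi>\<^sub>2 a"
    by auto
  have "\<psi>\<^sub>1 p = 0" "\<psi>\<^sub>2 p = 0" if "psd p" "vector_state x p = 0" for p
    using state_convex_combination_eq_0[OF states \<open>0 < t\<close> \<open>t < 1\<close> that(1)] that(2) split[of p]
    by simp_all
  then show "\<psi>\<^sub>1 = vector_state x" "\<psi>\<^sub>2 = vector_state x"
    using state_eq_vector_state_if_vanishing[OF _ unit] states by blast+
qed

lemma pure_states_differing_only_at_entry:
  fixes i j :: "'n::finite"
  assumes "i \<noteq> j"
  obtains \<phi> \<psi> :: "'n cmat \<Rightarrow> complex"
  where "pure_state \<phi>" "pure_state \<psi>" "\<And>a. a$i$j = 0 \<Longrightarrow> a$j$i = 0 \<Longrightarrow> \<phi> a = \<psi> a" "\<phi> \<noteq> \<psi>"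
proof -
  define c :: complex where "c = of_real (sqrt (1/2))"
  define x where "x s = (\<chi> k. if k = i then c else if k = j then s * c else 0)" for s
  have cc: "cnj c * c = 1/2"
    by (simp add: c_def flip: of_real_mult)
  have vector_state_x:
    "vector_state (x s) a = (a$i$i + s * a$i$j + cnj s * a$j$i + cnj s * s * a$j$j) / 2" for s a
  proof -
    have "vector_state (x s) a
        = cnj c * c * (a$i$i + s * a$i$j + cnj s * a$j$i + cnj s * s * a$j$j)"
      by (simp add: x_def vector_state_two_point[OF assms] algebra_simps)
    then show ?thesis
      by (simp add: cc)
  qed
  have pure: "pure_state (vector_state (x s))" if "s \<in> {1, -1}" for s
    using vector_state_x[of s "mat 1"] that assms
    by (intro pure_state_vector_state) (auto simp: vector_state_mat_1[symmetric] mat_def)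
  show thesis
  proof (rule that[OF pure pure])
    show "vector_state (x 1) a = vector_state (x (-1)) a" if "a$i$j = 0" "a$j$i = 0" for a
      using that by (simp add: vector_state_x)
    have "vector_state (x 1) (outer (axis i 1) (axis j 1))
        \<noteq> vector_state (x (-1)) (outer (axis i 1) (axis j 1))"
      using assms by (simp add: vector_state_x outer_def axis_def)
    then show "vector_state (x 1) \<noteq> vector_state (x (-1))"
      by metis
  qed simp_all
qed

theorem proposition4p3:
  fixes R :: "('n::finite \<times> 'n) set"
  assumes "tolerance_rel R"
  shows "((\<forall>\<phi> \<psi>. state_on UNIV \<phi> \<and> state_on UNIV \<psi> \<and> (\<forall>a\<in>A_of R. \<phi> a = \<psi> a) \<longrightarrow> \<phi> = \<psi>)
          \<longleftrightarrow> (\<forall>\<phi> \<psi>. pure_state \<phi> \<and> pure_state \<psi> \<and> (\<forall>a\<in>A_of R. \<phi> a = \<psi> a) \<longrightarrow> \<phi> = \<psi>))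
       \<and> ((\<forall>\<phi> \<psi>. pure_state \<phi> \<and> pure_state \<psi> \<and> (\<forall>a\<in>A_of R. \<phi> a = \<psi> a) \<longrightarrow> \<phi> = \<psi>)
          \<longleftrightarrow> A_of R = UNIV)"
proof -
  let ?states_injective =
    "\<forall>\<phi> \<psi>. state_on UNIV \<phi> \<and> state_on UNIV \<psi> \<and> (\<forall>a\<in>A_of R. \<phi> a = \<psi> a) \<longrightarrow> \<phi> = \<psi>"
  let ?pure_injective =
    "\<forall>\<phi> \<psi>. pure_state \<phi> \<and> pure_state \<psi> \<and> (\<forall>a\<in>A_of R. \<phi> a = \<psi> a) \<longrightarrow> \<phi> = \<psi>"
  have "A_of R = UNIV \<Longrightarrow> ?states_injective"
    by auto
  moreover have "?states_injective \<Longrightarrow> ?pure_injective"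
    by (auto simp: pure_state_def)
  moreover have "A_of R = UNIV" if ?pure_injective
  proof (rule ccontr)
    assume "A_of R \<noteq> UNIV"
    then obtain i j where "(i, j) \<notin> R"
      by (auto simp: A_of_def)
    with assms have "i \<noteq> j" and "(j, i) \<notin> R"
      by (auto simp: tolerance_rel_def sym_def)
    then obtain \<phi> \<psi> where "pure_state \<phi>" "pure_state \<psi>"
      and agree: "\<And>a. a$i$j = 0 \<Longrightarrow> a$j$i = 0 \<Longrightarrow> \<phi> a = \<psi> a" and "\<phi> \<noteq> \<psi>"
      using pure_states_differing_only_at_entry by blast
    moreover have "\<forall>a\<in>A_of R. \<phi> a = \<psi> a"
      using \<open>(i, j) \<notin> R\<close> \<open>(j, i) \<notin> R\<close> by (auto simp: A_of_def intro: agree)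
    ultimately show False
      using that by blast
  qed
  ultimately show ?thesis
    by blast
qed

end
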